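(* Let $G=(V,E)$ be a connected undirected graph (parallel edges allowed) with reactances $r_e>0$ and admittance matrix $\mathbf{A}$, $\vec{\theta}\in\mathbb{R}^V$, $\vec{p}=\mathbf{A}\vec{\theta}$. Let $H=(V_H,E_H)$ be a subgraph of $G$, $F\subseteq E_H$, $\mathbf{A}'$ the admittance matrix of $G'=(V,E\setminus F)$ (assumed connected), and $\vec{\theta}'$ with $\mathbf{A}'\vec{\theta}'=\vec{p}$. Suppose a data replay attack: there are $\vec{\theta}'',\vec{p}''\in\mathbb{R}^V$ with $\mathbf{A}\vec{\theta}''=\vec{p}''$ and $p''_v=p_v$ for all $v\in V_H$, and the observed vector $\vec{\theta}^{\star}$ satisfies $\theta^{\star}_v=\theta''_v$ for $v\in V_H$ and $\theta^{\star}_v=\theta'_v$ for $v\notin V_H$. Then for every $i\in\mathrm{int}(H)\cup\mathrm{int}(\bar H)$, $\mathbf{A}_i\vec{\theta}^{\star}=p_i$.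
   Context: Admittance matrix: for $u\neq v$, $a_{uv}=-\sum_e 1/r_e$ over edges joining $u,v$ ($0$ if none), $a_{uu}=-\sum_{w\neq u}a_{uw}$; $\mathbf{A}_i$ is its $i$-th row. $\bar H$ is the subgraph induced by $V\setminus V_H$. For a subgraph $S$ with node set $V_S$, $\mathrm{int}(S)=\{i\in V_S: N(i)\subseteq V_S\}$ with $N(i)$ the neighbors of $i$ in $G$. *)

theory Defs
  imports Main "HOL.Real"
begin

text \<open>An undirected multigraph: vertex set V, edge set E (edge identifiers, so parallel
edges are allowed), each edge e joining the endpoints src e and tgt e.\<close>

definition joins :: "('e \<Rightarrow> 'v) \<Rightarrow> ('e \<Rightarrow> 'v) \<Rightarrow> 'e \<Rightarrow> 'v \<Rightarrow> 'v \<Rightarrow> bool" where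
  "joins src tgt e u v \<longleftrightarrow> (src e = u \<and> tgt e = v) \<or> (src e = v \<and> tgt e = u)"

definition wf_graph :: "'v set \<Rightarrow> 'e set \<Rightarrow> ('e \<Rightarrow> 'v) \<Rightarrow> ('e \<Rightarrow> 'v) \<Rightarrow> bool" where
  "wf_graph V E src tgt \<longleftrightarrow> finite V \<and> finite E \<and> (\<forall>e\<in>E. src e \<in> V \<and> tgt e \<in> V)"

definition graph_connected :: "'v set \<Rightarrow> 'e set \<Rightarrow> ('e \<Rightarrow> 'v) \<Rightarrow> ('e \<Rightarrow> 'v) \<Rightarrow> bool" where
  "graph_connected V E src tgt \<longleftrightarrow>
     (\<forall>u\<in>V. \<forall>v\<in>V. (\<lambda>a b. \<exists>e\<in>E. joins src tgt e a b)\<^sup>*\<^sup>* u v)"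

definition admittance :: "'v set \<Rightarrow> 'e set \<Rightarrow> ('e \<Rightarrow> 'v) \<Rightarrow> ('e \<Rightarrow> 'v) \<Rightarrow> ('e \<Rightarrow> real)
    \<Rightarrow> 'v \<Rightarrow> 'v \<Rightarrow> real" where
  "admittance V E src tgt r u v =
     (if u \<noteq> v then - (\<Sum>e\<in>{e\<in>E. joins src tgt e u v}. 1 / r e)
      else (\<Sum>w\<in>V - {u}. (\<Sum>e\<in>{e\<in>E. joins src tgt e u w}. 1 / r e)))"

definition row_mul :: "'v set \<Rightarrow> ('v \<Rightarrow> 'v \<Rightarrow> real) \<Rightarrow> 'v \<Rightarrow> ('v \<Rightarrow> real) \<Rightarrow> real" where
  "row_mul V A i x = (\<Sum>v\<in>V. A i v * x v)"

definition nbrs :: "'e set \<Rightarrow> ('e \<Rightarrow> 'v) \<Rightarrow> ('e \<Rightarrow> 'v) \<Rightarrow> 'v \<Rightarrow> 'v set" where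
  "nbrs E src tgt i = {j. \<exists>e\<in>E. joins src tgt e i j}"

definition is_subgraph :: "'v set \<Rightarrow> 'e set \<Rightarrow> ('e \<Rightarrow> 'v) \<Rightarrow> ('e \<Rightarrow> 'v) \<Rightarrow> 'v set \<Rightarrow> 'e set \<Rightarrow> bool" where
  "is_subgraph V E src tgt VH EH \<longleftrightarrow> VH \<subseteq> V \<and> EH \<subseteq> E \<and> (\<forall>e\<in>EH. src e \<in> VH \<and> tgt e \<in> VH)"

definition interior_nodes :: "'e set \<Rightarrow> ('e \<Rightarrow> 'v) \<Rightarrow> ('e \<Rightarrow> 'v) \<Rightarrow> 'v set \<Rightarrow> 'v set" where
  "interior_nodes E src tgt VS = {i\<in>VS. nbrs E src tgt i \<subseteq> VS}"

end

theory Submission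
  imports Defs
begin

text \<open>Row i of the admittance matrix only involves i and its neighbours. An interior node
of H sees only entries of \<theta>s that agree with \<theta>'', and there p'' agrees with p. An interior
node of the complement sees only entries agreeing with \<theta>', and since every removed edge lies
in H it is not incident to that node, so its row is the same in A and A'.\<close>

lemma admittance_eq_0_if_not_nbr:
  assumes "v \<noteq> i" "v \<notin> nbrs E src tgt i"
  shows "admittance V E src tgt r i v = 0"
proof -
  have no_edges: "{e\<in>E. joins src tgt e i v} = {}"
    using assms(2) unfolding nbrs_def by blast
  show ?thesis
    using assms(1) unfolding admittance_def no_edges by simp
qed

lemma row_mul_admittance_cong:
  assumes "\<And>v. v \<in> V \<Longrightarrow> v = i \<or> v \<in> nbrs E src tgt i \<Longrightarrow> x v = y v"
  shows "row_mul V (admittance V E src tgt r) i x = row_mul V (admittance V E src tgt r) i y"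
  unfolding row_mul_def
  using assms admittance_eq_0_if_not_nbr[of _ i E src tgt V r] by (intro sum.cong) auto

lemma admittance_Diff_non_incident:
  assumes "\<And>e. e \<in> F \<Longrightarrow> src e \<noteq> i \<and> tgt e \<noteq> i"
  shows "admittance V (E - F) src tgt r i = admittance V E src tgt r i"
proof -
  have same_edges: "\<And>w. {e\<in>E - F. joins src tgt e i w} = {e\<in>E. joins src tgt e i w}"
    using assms unfolding joins_def by blast
  show ?thesis
    unfolding admittance_def same_edges ..
qed

theorem lemma5p5:
  fixes V :: "'v set" and E :: "'e set" and src tgt :: "'e \<Rightarrow> 'v" and r :: "'e \<Rightarrow> real"
    and VH :: "'v set" and EH F :: "'e set"
    and \<theta> \<theta>' \<theta>'' p p'' \<theta>s :: "'v \<Rightarrow> real"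
  assumes G: "wf_graph V E src tgt" "graph_connected V E src tgt"
    and r_pos: "\<forall>e\<in>E. r e > 0"
    and p_def: "\<forall>i\<in>V. p i = row_mul V (admittance V E src tgt r) i \<theta>"
    and H: "is_subgraph V E src tgt VH EH"
    and F: "F \<subseteq> EH"
    and G'_conn: "graph_connected V (E - F) src tgt"
    and \<theta>': "\<forall>i\<in>V. row_mul V (admittance V (E - F) src tgt r) i \<theta>' = p i"
    and \<theta>'': "\<forall>i\<in>V. row_mul V (admittance V E src tgt r) i \<theta>'' = p'' i"
    and p'': "\<forall>v\<in>VH. p'' v = p v"
    and \<theta>s_H: "\<forall>v\<in>VH. \<theta>s v = \<theta>'' v"
    and \<theta>s_nH: "\<forall>v\<in>V - VH. \<theta>s v = \<theta>' v"
  shows "\<forall>i \<in> interior_nodes E src tgt VH \<union> interior_nodes E src tgt (V - VH).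
           row_mul V (admittance V E src tgt r) i \<theta>s = p i"
proof
  fix i assume "i \<in> interior_nodes E src tgt VH \<union> interior_nodes E src tgt (V - VH)"
  then consider (inside) "i \<in> VH" "nbrs E src tgt i \<subseteq> VH"
    | (outside) "i \<in> V - VH" "nbrs E src tgt i \<subseteq> V - VH"
    unfolding interior_nodes_def by blast
  then show "row_mul V (admittance V E src tgt r) i \<theta>s = p i"
  proof cases
    case inside
    have "row_mul V (admittance V E src tgt r) i \<theta>s = row_mul V (admittance V E src tgt r) i \<theta>''"
      using inside \<theta>s_H by (intro row_mul_admittance_cong) blast
    also have "\<dots> = p i"
      using \<theta>'' p'' inside H unfolding is_subgraph_def by auto
    finally show ?thesis .
  next
    case outside
    have "\<And>e. e \<in> F \<Longrightarrow> src e \<noteq> i \<and> tgt e \<noteq> i"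
      using outside F H unfolding is_subgraph_def by auto
    then have row_eq: "admittance V (E - F) src tgt r i = admittance V E src tgt r i"
      by (rule admittance_Diff_non_incident)
    have "row_mul V (admittance V E src tgt r) i \<theta>s = row_mul V (admittance V E src tgt r) i \<theta>'"
      using outside \<theta>s_nH by (intro row_mul_admittance_cong) blast
    also have "\<dots> = row_mul V (admittance V (E - F) src tgt r) i \<theta>'"
      unfolding row_mul_def row_eq ..
    also have "\<dots> = p i"
      using \<theta>' outside by auto
    finally show ?thesis .
  qed
qed

end
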